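(* Let $X$ be the Hirzebruch surface of degree $e\ge0$ and let $J$ be the trivial group (acting trivially on $\operatorname{Pic}(X)$). If $e$ is odd, then $\operatorname{Am}^\chi(X,J)$ is trivial. If $e$ is even, then $\operatorname{Am}^\chi(X,J)\cong(\mathbb{Z}/2\mathbb{Z})^2$.
   Context: The Hirzebruch surface of degree $e$ is a ruled surface over $\mathbb{P}^1$ with a section of self-intersection $-e$. For $J$ trivial, $\operatorname{Am}^\chi(X,J):=\operatorname{Pic}(X)/\langle\chi(D)[D]\mid [D]\in\operatorname{Pic}(X)\rangle$, where $\chi(D)$ is the Euler–Poincaré characteristic of $\mathcal{O}_X(D)$. *)

theory Defs
  imports "HOL-Algebra.Algebra"
begin

text \<open>Model of the Picard group of the Hirzebruch surface of degree e:
  Pic(X) = Z s + Z f, where f is the class of a fibre and s the class of the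
  section with self-intersection -e.  A pair (a,b) stands for the class a s + b f.\<close>

definition hirz_Pic :: "(int \<times> int) monoid" where
  "hirz_Pic = integer_group \<times>\<times> integer_group"

text \<open>Intersection form: f.f = 0, s.f = 1, s.s = -e.\<close>
definition hirz_inter :: "nat \<Rightarrow> int \<times> int \<Rightarrow> int \<times> int \<Rightarrow> int" where
  "hirz_inter e D E = (let (a,b) = D; (c,d) = E in - int e * a * c + a * d + b * c)"

definition hirz_K :: "nat \<Rightarrow> int \<times> int" where
  "hirz_K e = (-2, - (int e + 2))"

text \<open>Euler--Poincare characteristic of O_X(D), via Riemann--Roch on a rational
  surface (chi(O_X) = 1): chi(D) = 1 + D.(D - K)/2 (the numerator is always even).\<close>
definition hirz_chi :: "nat \<Rightarrow> int \<times> int \<Rightarrow> int" where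
  "hirz_chi e D = 1 + (hirz_inter e D D - hirz_inter e D (hirz_K e)) div 2"

definition hirz_Am_chi :: "nat \<Rightarrow> (int \<times> int) set monoid" where
  "hirz_Am_chi e = hirz_Pic Mod
     generate hirz_Pic ((\<lambda>D. pow hirz_Pic D (hirz_chi e D)) ` carrier hirz_Pic)"

end

theory Submission
  imports Defs
begin

text \<open>By Riemann--Roch, \<open>\<chi>(a s + b f) = (1 + a)(1 + b) - e a(a + 1)/2\<close>. The fibre gives
  \<open>\<chi>(f) f = 2 f\<close>. If \<open>e = 2k\<close>, then \<open>\<chi>(s + k f) = 2\<close> yields \<open>2 s\<close>, while every \<open>\<chi>(D) D\<close> lies
  in \<open>2 Pic(X)\<close> because \<open>\<chi>(D) \<equiv> (1 + a)(1 + b) mod 2\<close> and \<open>a(1 + a)\<close>, \<open>b(1 + b)\<close> are even;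
  so the subgroup is \<open>2 Pic(X)\<close>. If \<open>e = 2k + 1\<close>, then \<open>\<chi>(s + k f) = 1\<close> and
  \<open>\<chi>(s + (k + 1) f) = 3\<close>, so \<open>s + k f\<close> and \<open>3 f\<close> lie in the subgroup, which together with \<open>2 f\<close>
  generate all of \<open>Pic(X)\<close>.\<close>

lemma (in group) trivial_group_FactGroup_self: "trivial_group (G Mod carrier G)"
proof -
  have "carrier (G Mod carrier G) = {carrier G}"
    using subgroup.rcos_const[OF subgroup_self is_group] by (auto simp: carrier_FactGroup)
  then show ?thesis
    using normal.factorgroup_is_group[OF normal_self] by (simp add: trivial_group_def)
qed

lemma group_hirz_Pic: "group hirz_Pic"
  unfolding hirz_Pic_def by (intro DirProd_group) simp_all

lemma carrier_hirz_Pic [simp]: "carrier hirz_Pic = UNIV"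
  unfolding hirz_Pic_def by simp

lemma hirz_Pic_mult [simp]: "(a, b) \<otimes>\<^bsub>hirz_Pic\<^esub> (c, d) = (a + c, b + d)"
  unfolding hirz_Pic_def by simp

lemma hirz_Pic_one [simp]: "\<one>\<^bsub>hirz_Pic\<^esub> = (0, 0)"
  unfolding hirz_Pic_def by simp

lemma hirz_Pic_inv [simp]: "inv\<^bsub>hirz_Pic\<^esub> (a, b) = (- a, - b)"
  unfolding hirz_Pic_def by (simp add: inv_DirProd)

lemma hirz_Pic_nat_pow [simp]: "pow hirz_Pic (a, b) (n::nat) = (int n * a, int n * b)"
  by (induction n) (auto simp: algebra_simps)

lemma hirz_Pic_int_pow [simp]: "pow hirz_Pic (a, b) (n::int) = (n * a, n * b)"
  by (simp add: int_pow_def2)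

lemma hirz_Pic_subgroup_lin_comb:
  assumes "subgroup K hirz_Pic" "(a, b) \<in> K" "(c, d) \<in> K"
  shows "(m * a + n * c, m * b + n * d) \<in> K"
proof -
  have "(m * a, m * b) \<in> K" "(n * c, n * d) \<in> K"
    using group.subgroup_int_pow_closed[OF group_hirz_Pic assms(1)] assms(2,3)
    by (metis hirz_Pic_int_pow)+
  then show ?thesis
    using subgroup.m_closed[OF assms(1)] by (metis hirz_Pic_mult)
qed

lemma hirz_Pic_subgroup_multiples:
  assumes "subgroup K hirz_Pic" "(n, 0) \<in> K" "(0, n) \<in> K"
  shows "(n * a, n * b) \<in> K"
  using hirz_Pic_subgroup_lin_comb[OF assms, of a b] by (simp add: mult.commute)

lemma hirz_chi_eq: "hirz_chi e (a, b) = (1 + a) * (1 + b) - int e * (a * (a + 1) div 2)"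
proof -
  have "a * (a + 1) = 2 * (a * (a + 1) div 2)" by simp
  then have "hirz_inter e (a, b) (a, b) - hirz_inter e (a, b) (hirz_K e)
      = 2 * ((1 + a) * (1 + b) - 1 - int e * (a * (a + 1) div 2))"
    by (simp add: hirz_inter_def hirz_K_def algebra_simps)
  then show ?thesis
    unfolding hirz_chi_def by simp
qed

definition hirz_chi_subgroup :: "nat \<Rightarrow> (int \<times> int) set" where
  "hirz_chi_subgroup e = generate hirz_Pic ((\<lambda>D. pow hirz_Pic D (hirz_chi e D)) ` UNIV)"

lemma hirz_Am_chi_eq: "hirz_Am_chi e = hirz_Pic Mod hirz_chi_subgroup e"
  by (simp add: hirz_Am_chi_def hirz_chi_subgroup_def)

lemma subgroup_hirz_chi_subgroup: "subgroup (hirz_chi_subgroup e) hirz_Pic"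
  unfolding hirz_chi_subgroup_def by (rule group.generate_is_subgroup[OF group_hirz_Pic]) simp

lemma hirz_chi_mult_in_hirz_chi_subgroup:
  "(hirz_chi e (a, b) * a, hirz_chi e (a, b) * b) \<in> hirz_chi_subgroup e"
  unfolding hirz_chi_subgroup_def
  by (rule generate.incl, rule image_eqI[where x = "(a, b)"]) auto

lemma hirz_chi_subgroup_lin_comb:
  "(a, b) \<in> hirz_chi_subgroup e \<Longrightarrow> (c, d) \<in> hirz_chi_subgroup e \<Longrightarrow>
    (m * a + n * c, m * b + n * d) \<in> hirz_chi_subgroup e"
  by (rule hirz_Pic_subgroup_lin_comb[OF subgroup_hirz_chi_subgroup])

lemma double_fibre_in_hirz_chi_subgroup: "(0, 2) \<in> hirz_chi_subgroup e"
  using hirz_chi_mult_in_hirz_chi_subgroup[of e 0 1] by (simp add: hirz_chi_eq)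

lemma hirz_chi_subgroup_odd:
  assumes "odd e"
  shows "hirz_chi_subgroup e = UNIV"
proof -
  obtain m where "e = 2 * m + 1"
    using assms by (rule oddE)
  then obtain k where k: "int e = 2 * k + 1"
    by (intro that[of "int m"]) simp
  have "hirz_chi e (1, k) = 1"
    by (simp add: hirz_chi_eq k)
  then have shifted_section: "(1, k) \<in> hirz_chi_subgroup e"
    using hirz_chi_mult_in_hirz_chi_subgroup[of e 1 k] by simp
  have "hirz_chi e (1, k + 1) = 3"
    by (simp add: hirz_chi_eq k)
  then have next_section_triple: "(3, 3 * k + 3) \<in> hirz_chi_subgroup e"
    using hirz_chi_mult_in_hirz_chi_subgroup[of e 1 "k + 1"] by (simp add: algebra_simps)
  have triple_fibre: "(0, 3) \<in> hirz_chi_subgroup e"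
    using hirz_chi_subgroup_lin_comb[OF next_section_triple shifted_section, of 1 "-3"] by simp
  have fibre: "(0, 1) \<in> hirz_chi_subgroup e"
    using hirz_chi_subgroup_lin_comb[OF triple_fibre double_fibre_in_hirz_chi_subgroup, of 1 "-1"]
    by simp
  have "(1, 0) \<in> hirz_chi_subgroup e"
    using hirz_chi_subgroup_lin_comb[OF shifted_section fibre, of 1 "-k"] by simp
  then have "(a, b) \<in> hirz_chi_subgroup e" for a b
    using hirz_Pic_subgroup_multiples[OF subgroup_hirz_chi_subgroup _ fibre, of a b] by simp
  then show ?thesis
    by auto
qed

lemma even_hirz_chi_mult:
  assumes "even e"
  shows "even (hirz_chi e (a, b) * a)" "even (hirz_chi e (a, b) * b)"
proof -
  have "even (hirz_chi e (a, b) - (1 + a) * (1 + b))"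
    using assms by (simp add: hirz_chi_eq)
  moreover have "even ((1 + a) * (1 + b) * a)" "even ((1 + a) * (1 + b) * b)"
    by simp_all
  ultimately show "even (hirz_chi e (a, b) * a)" "even (hirz_chi e (a, b) * b)"
    by (metis dvd_add dvd_mult2 diff_add_cancel distrib_right)+
qed

lemma hirz_chi_subgroup_even:
  assumes "even e"
  shows "hirz_chi_subgroup e = {(a, b). even a \<and> even b}"
proof
  have "subgroup {(a, b). even a \<and> even b} hirz_Pic"
    by (rule group.subgroupI[OF group_hirz_Pic]) auto
  then show "hirz_chi_subgroup e \<subseteq> {(a, b). even a \<and> even b}"
    unfolding hirz_chi_subgroup_def
    using even_hirz_chi_mult[OF assms]
    by (intro group.generate_subgroup_incl[OF group_hirz_Pic]) auto
next
  obtain m where "e = 2 * m"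
    using assms by (rule evenE)
  then obtain k where k: "int e = 2 * k"
    by (intro that[of "int m"]) simp
  have "hirz_chi e (1, k) = 2"
    by (simp add: hirz_chi_eq k)
  then have double_section: "(2, 2 * k) \<in> hirz_chi_subgroup e"
    using hirz_chi_mult_in_hirz_chi_subgroup[of e 1 k] by simp
  have "(2, 0) \<in> hirz_chi_subgroup e"
    using hirz_chi_subgroup_lin_comb[OF double_section double_fibre_in_hirz_chi_subgroup, of 1 "-k"]
    by simp
  then have "(2 * a, 2 * b) \<in> hirz_chi_subgroup e" for a b
    using hirz_Pic_subgroup_multiples[OF subgroup_hirz_chi_subgroup _ double_fibre_in_hirz_chi_subgroup]
    by simp
  then show "{(a, b). even a \<and> even b} \<subseteq> hirz_chi_subgroup e"
    by (auto elim!: evenE)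
qed

definition reduce_mod2 :: "int \<times> int \<Rightarrow> int \<times> int" where
  "reduce_mod2 p = (fst p mod 2, snd p mod 2)"

lemma group_hom_reduce_mod2:
  "group_hom hirz_Pic (integer_mod_group 2 \<times>\<times> integer_mod_group 2) reduce_mod2"
proof -
  have "reduce_mod2 \<in> hom hirz_Pic (integer_mod_group 2 \<times>\<times> integer_mod_group 2)"
    by (rule homI)
      (auto simp: carrier_integer_mod_group reduce_mod2_def mod_add_eq)
  then show ?thesis
    by (intro group_hom.intro group_hom_axioms.intro group_hirz_Pic DirProd_group) simp_all
qed

lemma kernel_reduce_mod2:
  "kernel hirz_Pic (integer_mod_group 2 \<times>\<times> integer_mod_group 2) reduce_mod2
    = {(a, b). even a \<and> even b}"
  unfolding kernel_def reduce_mod2_def by auto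

lemma reduce_mod2_onto:
  "reduce_mod2 ` carrier hirz_Pic = carrier (integer_mod_group 2 \<times>\<times> integer_mod_group 2)"
proof -
  have "p = reduce_mod2 p" if "p \<in> {0..<2} \<times> {0..<2}" for p
    using that by (auto simp: reduce_mod2_def)
  then show ?thesis
    by (auto simp: carrier_integer_mod_group reduce_mod2_def)
qed

theorem proposition7p1:
  fixes e :: nat
  shows "(odd e \<longrightarrow> trivial_group (hirz_Am_chi e)) \<and>
         (even e \<longrightarrow> hirz_Am_chi e \<cong> integer_mod_group 2 \<times>\<times> integer_mod_group 2)"
proof (intro conjI impI)
  assume "odd e"
  then show "trivial_group (hirz_Am_chi e)"
    using group.trivial_group_FactGroup_self[OF group_hirz_Pic]
    by (simp add: hirz_Am_chi_eq hirz_chi_subgroup_odd)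
next
  assume "even e"
  show "hirz_Am_chi e \<cong> integer_mod_group 2 \<times>\<times> integer_mod_group 2"
    unfolding hirz_Am_chi_eq hirz_chi_subgroup_even[OF \<open>even e\<close>] kernel_reduce_mod2[symmetric]
    by (rule group_hom.FactGroup_iso[OF group_hom_reduce_mod2 reduce_mod2_onto])
qed

end
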